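(* Let $b\ge 2$ be an integer and let $w$ be a fixed block of $b$-ary digits of length $p\ge1$. For each integer $k\ge 0$ let $\mu_k$ be the discrete measure on $[0,1)$ $$\mu_k=\sum_{X:\,k_w(X)=k} b^{-|X|}\,\delta_{x(X)},$$ where the sum is over all finite strings $X$ of $b$-ary digits (the empty string included) with $k_w(X)=k$. Then, as $k\to\infty$, $\mu_k$ converges weakly to $b^p$ times Lebesgue measure on $[0,1)$. Precisely, for every interval $I\subset[0,1)$, $$\lim_{k\to\infty}\mu_k(I)=b^p\,|I|,$$ where $|I|=\sup I-\inf I$.
   Context: Strings are finite sequences over the alphabet $\{0,1,\dots,b-1\}$, including the empty string $\epsilon$. The length of a string $X$ is $|X|$. For a string $X$, $n(X)$ is the non-negative integer it represents in base $b$ (left-to-right positional notation), with $n(\epsilon)=0$, and $x(X)=n(X)/b^{|X|}\in[0,1)$. $k_w(X)$ is the number of occurrences of $w$ in $X$, counting possibly overlapping occurrences: indices $i$ with $x_i\dots x_{i+p-1}=w$. $\delta_y$ denotes the Dirac mass at $y$. *)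

theory Defs
  imports "HOL-Analysis.Analysis"
begin

definition is_string :: "nat \<Rightarrow> nat list \<Rightarrow> bool" where
  "is_string b X \<longleftrightarrow> (\<forall>d\<in>set X. d < b)"

definition str_val :: "nat \<Rightarrow> nat list \<Rightarrow> nat" where
  "str_val b X = foldl (\<lambda>acc d. acc * b + d) 0 X"

definition str_x :: "nat \<Rightarrow> nat list \<Rightarrow> real" where
  "str_x b X = real (str_val b X) / real b ^ length X"

definition occ :: "nat list \<Rightarrow> nat list \<Rightarrow> nat" where
  "occ w X = card {i. i + length w \<le> length X \<and> take (length w) (drop i X) = w}"

definition mu :: "nat \<Rightarrow> nat list \<Rightarrow> nat \<Rightarrow> real set \<Rightarrow> ennreal" where
  "mu b w k I = (\<Sum>\<^sub>\<infinity> X \<in> {X. is_string b X \<and> occ w X = k \<and> str_x b X \<in> I}.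
                    ennreal (1 / real b ^ length X))"

end

(*
  Weight a string X by b^-|X|.  For a prefix u of length m < k, the strings u Y with exactly k
  occurrences of w have total weight b^-m * b^|w|, independently of u.  Indeed, splitting Y at the
  end of the k-th occurrence of w writes it uniquely as a first passage followed by a tail that
  creates no further occurrence after that final copy of w.  The first passages carry weight 1,
  since almost every infinite string contains w infinitely often, and the tails carry weight
  b^|w|, since almost every infinite string contains w at least once.  As x(u Y) lies in the
  b-adic cell of u, mu_k(I) is b^|w| times the length of a union of cells of size b^-m
  approximating I, up to two boundary cells; letting m grow gives the limit.
*)
theory Submission
  imports Defs "HOL-Library.Sublist"
begin

section \<open>Sums of nonnegative extended reals\<close>

lemma infsum_ennreal_SUP:
  "infsum (f :: 'a \<Rightarrow> ennreal) A = (SUP F\<in>{F. finite F \<and> F \<subseteq> A}. sum f F)"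
  by (rule nonneg_infsum_complete) auto

lemma infsum_ennreal_mono_set:
  "A \<subseteq> B \<Longrightarrow> infsum (f :: 'a \<Rightarrow> ennreal) A \<le> infsum f B"
  unfolding infsum_ennreal_SUP by (intro SUP_subset_mono) auto

lemma sum_le_infsum_ennreal:
  "finite F \<Longrightarrow> F \<subseteq> A \<Longrightarrow> sum (f :: 'a \<Rightarrow> ennreal) F \<le> infsum f A"
  unfolding infsum_ennreal_SUP by (intro SUP_upper) auto

lemma infsum_ennreal_cmult_right:
  "infsum (\<lambda>x. c * (f :: 'a \<Rightarrow> ennreal) x) A = c * infsum f A"
  unfolding infsum_ennreal_SUP SUP_mult_left_ennreal sum_distrib_left by simp

lemma infsum_ennreal_Sigma_finite:
  fixes f :: "'a \<times> 'b \<Rightarrow> ennreal"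
  assumes "finite A"
  shows "infsum f (Sigma A B) = (\<Sum>x\<in>A. infsum (\<lambda>y. f (x, y)) (B x))"
  using assms
proof (induction A rule: finite_induct)
  case (insert a A)
  have "Sigma (insert a A) B = Pair a ` B a \<union> Sigma A B"
    by auto
  then have "infsum f (Sigma (insert a A) B) = infsum f (Pair a ` B a) + infsum f (Sigma A B)"
    using insert.hyps by (simp only:) (intro infsum_Un_disjoint; auto intro: nonneg_summable_on_complete)
  also have "infsum f (Pair a ` B a) = infsum (\<lambda>y. f (a, y)) (B a)"
    by (subst infsum_reindex) (auto simp: inj_on_def o_def)
  finally show ?case
    using insert by simp
qed simp

lemma infsum_ennreal_Sigma:
  fixes f :: "'a \<times> 'b \<Rightarrow> ennreal"
  shows "infsum f (Sigma A B) = infsum (\<lambda>x. infsum (\<lambda>y. f (x, y)) (B x)) A"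
proof (rule antisym)
  show "infsum f (Sigma A B) \<le> infsum (\<lambda>x. infsum (\<lambda>y. f (x, y)) (B x)) A"
    unfolding infsum_ennreal_SUP[of f]
  proof (rule SUP_least)
    fix F assume F: "F \<in> {F. finite F \<and> F \<subseteq> Sigma A B}"
    have "sum f F \<le> infsum f (Sigma (fst ` F) B)"
      using F by (intro sum_le_infsum_ennreal) force+
    also have "\<dots> = (\<Sum>x\<in>fst ` F. infsum (\<lambda>y. f (x, y)) (B x))"
      using F by (intro infsum_ennreal_Sigma_finite) auto
    also have "\<dots> \<le> infsum (\<lambda>x. infsum (\<lambda>y. f (x, y)) (B x)) A"
      using F by (intro sum_le_infsum_ennreal) auto
    finally show "sum f F \<le> \<dots>" .
  qed
next
  show "infsum (\<lambda>x. infsum (\<lambda>y. f (x, y)) (B x)) A \<le> infsum f (Sigma A B)"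
    unfolding infsum_ennreal_SUP[of "\<lambda>x. infsum (\<lambda>y. f (x, y)) (B x)"]
  proof (rule SUP_least)
    fix F assume F: "F \<in> {F. finite F \<and> F \<subseteq> A}"
    then have "(\<Sum>x\<in>F. infsum (\<lambda>y. f (x, y)) (B x)) = infsum f (Sigma F B)"
      by (intro infsum_ennreal_Sigma_finite[symmetric]) auto
    also have "\<dots> \<le> infsum f (Sigma A B)"
      using F by (intro infsum_ennreal_mono_set) auto
    finally show "(\<Sum>x\<in>F. infsum (\<lambda>y. f (x, y)) (B x)) \<le> infsum f (Sigma A B)" .
  qed
qed

lemma infsum_ennreal_product:
  fixes f g :: "_ \<Rightarrow> ennreal"
  shows "infsum (\<lambda>(x, y). f x * g y) (A \<times> B) = infsum f A * infsum g B"
proof -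
  have "infsum (\<lambda>(x, y). f x * g y) (A \<times> B) = infsum (\<lambda>x. f x * infsum g B) A"
    by (simp add: infsum_ennreal_Sigma infsum_ennreal_cmult_right)
  also have "\<dots> = infsum f A * infsum g B"
    using infsum_ennreal_cmult_right[of "infsum g B" f A] by (simp add: mult.commute)
  finally show ?thesis .
qed

lemma infsum_ennreal_eq_lim_truncations:
  fixes f :: "'a \<Rightarrow> real" and size :: "'a \<Rightarrow> nat"
  assumes fin: "\<And>N. finite {x\<in>A. size x \<le> N}" and nonneg: "\<And>x. x \<in> A \<Longrightarrow> 0 \<le> f x"
    and lim: "(\<lambda>N. \<Sum>x\<in>{x\<in>A. size x \<le> N}. f x) \<longlonglongrightarrow> L"
  shows "infsum (\<lambda>x. ennreal (f x)) A = ennreal L"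
proof -
  let ?S = "\<lambda>N. \<Sum>x\<in>{x\<in>A. size x \<le> N}. ennreal (f x)"
  have "infsum (\<lambda>x. ennreal (f x)) A = (SUP N. ?S N)"
  proof (rule antisym)
    show "infsum (\<lambda>x. ennreal (f x)) A \<le> (SUP N. ?S N)"
      unfolding infsum_ennreal_SUP
    proof (rule SUP_least)
      fix F assume F: "F \<in> {F. finite F \<and> F \<subseteq> A}"
      then have "F \<subseteq> {x\<in>A. size x \<le> Max (size ` F)}"
        by auto
      then have "sum (\<lambda>x. ennreal (f x)) F \<le> ?S (Max (size ` F))"
        using fin by (intro sum_mono2) auto
      also have "\<dots> \<le> (SUP N. ?S N)"
        by (rule SUP_upper) simp
      finally show "sum (\<lambda>x. ennreal (f x)) F \<le> (SUP N. ?S N)" .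
    qed
    show "(SUP N. ?S N) \<le> infsum (\<lambda>x. ennreal (f x)) A"
      using fin by (intro SUP_least sum_le_infsum_ennreal) auto
  qed
  moreover have "?S \<longlonglongrightarrow> (SUP N. ?S N)"
    using fin by (intro LIMSEQ_SUP incseq_SucI sum_mono2) auto
  moreover have "?S \<longlonglongrightarrow> ennreal L"
    using lim fin nonneg by (subst sum_ennreal) auto
  ultimately show ?thesis
    using LIMSEQ_unique by metis
qed

section \<open>Occurrences of a pattern\<close>

lemma suffix_iff_drop:
  "suffix w X \<longleftrightarrow> length w \<le> length X \<and> drop (length X - length w) X = w"
proof
  assume "suffix w X"
  then obtain zs where "X = zs @ w"
    by (auto simp: suffix_def)
  then show "length w \<le> length X \<and> drop (length X - length w) X = w"
    by simp
next
  assume "length w \<le> length X \<and> drop (length X - length w) X = w"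
  then show "suffix w X"
    by (metis suffix_drop)
qed

lemma suffix_append_long:
  "length w \<le> length V \<Longrightarrow> suffix w (U @ V) \<longleftrightarrow> suffix w V"
  by (auto simp: suffix_iff_drop drop_append)

lemma occ_Nil: "w \<noteq> [] \<Longrightarrow> occ w [] = 0"
  by (simp add: occ_def)

lemma occ_snoc:
  assumes "w \<noteq> []"
  shows "occ w (X @ [d]) = occ w X + (if suffix w (X @ [d]) then 1 else 0)"
proof -
  define p n where "p = length w" and "n = length X"
  let ?old = "{i. i + p \<le> n \<and> take p (drop i X) = w}"
  have eq: "{i. i + p \<le> length (X @ [d]) \<and> take p (drop i (X @ [d])) = w} =
      ?old \<union> (if suffix w (X @ [d]) then {n + 1 - p} else {})"
  proof (intro set_eqI iffI)
    fix i assume "i \<in> {i. i + p \<le> length (X @ [d]) \<and> take p (drop i (X @ [d])) = w}"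
    then have i: "i + p \<le> n + 1" "take p (drop i (X @ [d])) = w"
      by (auto simp: n_def)
    show "i \<in> ?old \<union> (if suffix w (X @ [d]) then {n + 1 - p} else {})"
    proof (cases "i + p \<le> n")
      case True
      then show ?thesis
        using i by (auto simp: n_def take_append)
    next
      case False
      then have "i = n + 1 - p" "p \<le> n + 1"
        using i by simp_all
      moreover have "drop i (X @ [d]) = w"
        using i \<open>\<not> i + p \<le> n\<close> by (auto simp: n_def p_def)
      ultimately show ?thesis
        by (auto simp: suffix_iff_drop n_def p_def)
    qed
  next
    fix i assume "i \<in> ?old \<union> (if suffix w (X @ [d]) then {n + 1 - p} else {})"
    then show "i \<in> {i. i + p \<le> length (X @ [d]) \<and> take p (drop i (X @ [d])) = w}"
      by (auto simp: n_def p_def take_append suffix_iff_drop split: if_splits)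
  qed
  have "finite ?old"
    by (rule finite_subset[of _ "{..n}"]) auto
  moreover have "?old \<inter> (if suffix w (X @ [d]) then {n + 1 - p} else {}) = {}"
    using assms by (auto simp: p_def)
  ultimately show ?thesis
    unfolding occ_def p_def[symmetric] eq by (subst card_Un_disjoint) (auto simp: n_def)
qed

text \<open>Every occurrence of \<open>w\<close> in \<open>X @ Y\<close> either lies in \<open>X\<close> or is counted by the position in
  \<open>Y\<close> where it ends.\<close>

lemma occ_append:
  assumes "w \<noteq> []"
  shows "occ w (X @ Y) = occ w X + card {j\<in>{1..length Y}. suffix w (X @ take j Y)}"
proof (induction Y rule: rev_induct)
  case (snoc d Y)
  have eq: "{j\<in>{1..length (Y @ [d])}. suffix w (X @ take j (Y @ [d]))} =
     {j\<in>{1..length Y}. suffix w (X @ take j Y)} \<union>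
     (if suffix w (X @ Y @ [d]) then {length Y + 1} else {})"
    by (auto simp: take_append le_Suc_eq split: if_splits)
  have "occ w (X @ Y @ [d]) = occ w (X @ Y) + (if suffix w (X @ Y @ [d]) then 1 else 0)"
    using occ_snoc[OF assms, of "X @ Y" d] by simp
  then show ?case
    unfolding eq using snoc by (subst card_Un_disjoint) auto
qed simp

lemma occ_self: "w \<noteq> [] \<Longrightarrow> occ w w = 1"
proof -
  have "{i. i + length w \<le> length w \<and> take (length w) (drop i w) = w} = {0}"
    by auto
  then show ?thesis
    by (simp add: occ_def)
qed

lemma occ_le_length:
  assumes "w \<noteq> []"
  shows "occ w X \<le> length X"
proof -
  have "{i. i + length w \<le> length X \<and> take (length w) (drop i X) = w} \<subseteq> {..<length X}"
    using assms by (cases w) auto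
  then show ?thesis
    unfolding occ_def by (metis card_lessThan card_mono finite_lessThan)
qed

lemma occ_le_occ_append: "w \<noteq> [] \<Longrightarrow> occ w X \<le> occ w (X @ Y)"
  using occ_append[of w X Y] by simp

lemma occ_append_ge:
  assumes "w \<noteq> []"
  shows "occ w X + occ w Y \<le> occ w (X @ Y)"
proof -
  have "occ w Y = card {j\<in>{1..length Y}. suffix w (take j Y)}"
    using occ_append[OF assms, of "[]" Y] by (simp add: occ_Nil[OF assms])
  also have "\<dots> \<le> card {j\<in>{1..length Y}. suffix w (X @ take j Y)}"
    by (intro card_mono) (auto intro: suffix_appendI)
  finally show ?thesis
    using occ_append[OF assms, of X Y] by simp
qed

text \<open>Once \<open>t\<close> ends with \<open>w\<close>, the occurrences counted after \<open>t\<close> only depend on this final copy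
  of \<open>w\<close>.\<close>

lemma occ_append_after_suffix:
  assumes "w \<noteq> []" "suffix w t"
  shows "occ w (t @ Y) + 1 = occ w t + occ w (w @ Y)"
proof -
  obtain t' where t': "t = t' @ w"
    using assms(2) by (auto simp: suffix_def)
  have "{j\<in>{1..length Y}. suffix w (t @ take j Y)} = {j\<in>{1..length Y}. suffix w (w @ take j Y)}"
    unfolding t' using suffix_append_long[of w "w @ take _ Y" t'] by auto
  then show ?thesis
    using occ_append[OF assms(1), of t Y] occ_append[OF assms(1), of w Y] occ_self[OF assms(1)]
    by simp
qed

lemma first_passage_exists:
  assumes "w \<noteq> []" "occ w s < k" "k \<le> occ w (s @ Y)"
  obtains j where "j \<le> length Y" "occ w (s @ take j Y) = k" "suffix w (s @ take j Y)"
proof -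
  define P where "P j \<longleftrightarrow> k \<le> occ w (s @ take j Y)" for j
  have "P (length Y)"
    using assms by (simp add: P_def)
  define j where "j = (LEAST j. P j)"
  have Pj: "P j" and jle: "j \<le> length Y"
    unfolding j_def by (rule LeastI, fact) (rule Least_le, fact)
  have "j \<noteq> 0"
    using Pj assms(2) by (intro notI) (simp add: P_def)
  then obtain i where ij: "j = Suc i"
    using not0_implies_Suc by blast
  have notPi: "\<not> P i"
    using ij j_def not_less_Least by (metis lessI)
  have "take j Y = take i Y @ [Y ! i]"
    using ij jle by (simp add: take_Suc_conv_app_nth)
  then have "occ w (s @ take j Y) = occ w (s @ take i Y) + (if suffix w (s @ take j Y) then 1 else 0)"
    using occ_snoc[OF assms(1), of "s @ take i Y" "Y ! i"] by simp
  then show thesis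
    using that[OF jle] Pj notPi by (auto simp: P_def split: if_splits)
qed

text \<open>This makes first passages to a given number of occurrences prefix-free.\<close>

lemma suffix_extension_adds_occ:
  assumes "w \<noteq> []" "suffix w t" "suffix w (t @ Z)" "Z \<noteq> []"
  shows "occ w t < occ w (t @ Z)"
proof -
  obtain t' where "t = t' @ w"
    using assms(2) by (auto simp: suffix_def)
  then have "suffix w (w @ Z)"
    using assms(3) suffix_append_long[of w "w @ Z" t'] by simp
  obtain Z' d where Z: "Z = Z' @ [d]"
    using assms(4) rev_exhaust by blast
  have "occ w w \<le> occ w (w @ Z')"
    by (rule occ_le_occ_append[OF assms(1)])
  then have "2 \<le> occ w (w @ Z)"
    using occ_snoc[OF assms(1), of "w @ Z'" d] \<open>suffix w (w @ Z)\<close> occ_self[OF assms(1)] Z by simp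
  then show ?thesis
    using occ_append_after_suffix[OF assms(1,2), of Z] by simp
qed

section \<open>Strings of fixed length and \<open>b\<close>-adic cells\<close>

definition strings :: "nat \<Rightarrow> nat \<Rightarrow> nat list set" where
  "strings b n = {X. set X \<subseteq> {..<b} \<and> length X = n}"

lemma finite_strings [simp]: "finite (strings b n)"
  unfolding strings_def by (rule finite_lists_length_eq) simp

lemma card_strings [simp]: "card (strings b n) = b ^ n"
  unfolding strings_def using card_lists_length_eq[of "{..<b}" n] by simp

lemma is_string_iff: "is_string b X \<longleftrightarrow> set X \<subseteq> {..<b}"
  by (auto simp: is_string_def)

lemma str_val_snoc: "str_val b (X @ [d]) = str_val b X * b + d"
  by (simp add: str_val_def)

lemma str_val_append: "str_val b (X @ Y) = str_val b X * b ^ length Y + str_val b Y"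
proof (induction Y rule: rev_induct)
  case (snoc d Y)
  then show ?case
    by (simp only: append_assoc[symmetric] str_val_snoc) (simp add: algebra_simps)
qed (simp add: str_val_def)

lemma str_val_less:
  assumes "set X \<subseteq> {..<b}"
  shows "str_val b X < b ^ length X"
  using assms
proof (induction X rule: rev_induct)
  case (snoc d X)
  then have IH: "str_val b X + 1 \<le> b ^ length X" and "d < b"
    by auto
  have "str_val b (X @ [d]) < (str_val b X + 1) * b"
    using \<open>d < b\<close> by (simp add: str_val_snoc)
  also have "\<dots> \<le> b ^ length X * b"
    using IH by (rule mult_right_mono) simp
  finally show ?case
    by (simp add: mult.commute)
qed (simp add: str_val_def)

lemma inj_on_str_val: "inj_on (str_val b) (strings b n)"
proof (induction n)
  case 0
  then show ?case
    by (simp add: strings_def inj_on_def)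
next
  case (Suc n)
  show ?case
  proof (rule inj_onI)
    fix X X' assume X: "X \<in> strings b (Suc n)" and X': "X' \<in> strings b (Suc n)"
      and eq: "str_val b X = str_val b X'"
    obtain Y d where Y: "X = Y @ [d]"
      using X by (cases X rule: rev_exhaust) (auto simp: strings_def)
    obtain Y' d' where Y': "X' = Y' @ [d']"
      using X' by (cases X' rule: rev_exhaust) (auto simp: strings_def)
    have digits: "d < b" "d' < b" and "Y \<in> strings b n" "Y' \<in> strings b n"
      using X X' Y Y' by (auto simp: strings_def)
    have val: "str_val b Y * b + d = str_val b Y' * b + d'"
      using eq Y Y' by (simp add: str_val_snoc)
    then have "(str_val b Y * b + d) mod b = (str_val b Y' * b + d') mod b"
      by simp
    then have "d = d'"
      using digits by simp
    then have "str_val b Y = str_val b Y'"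
      using val digits by simp
    then show "X = X'"
      using Suc.IH \<open>Y \<in> strings b n\<close> \<open>Y' \<in> strings b n\<close> Y Y' \<open>d = d'\<close>
      by (auto dest: inj_onD)
  qed
qed

lemma bij_betw_str_val: "bij_betw (str_val b) (strings b n) {..<b ^ n}"
proof -
  have "str_val b ` strings b n \<subseteq> {..<b ^ n}"
    using str_val_less by (auto simp: strings_def)
  moreover have "card (str_val b ` strings b n) = card {..<b ^ n}"
    using card_image[OF inj_on_str_val] by simp
  ultimately show ?thesis
    using inj_on_str_val by (auto simp: bij_betw_def card_subset_eq)
qed

definition grid_cell :: "nat \<Rightarrow> nat \<Rightarrow> real set" where
  "grid_cell B j = {real j / real B ..< (real j + 1) / real B}"

lemma str_x_in_grid_cell:
  assumes "b > 0" "length u = m" "set Y \<subseteq> {..<b}"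
  shows "str_x b (u @ Y) \<in> grid_cell (b ^ m) (str_val b u)"
proof -
  let ?n = "length Y"
  have x: "str_x b (u @ Y) =
      (real (str_val b u) * real b ^ ?n + real (str_val b Y)) / (real b ^ m * real b ^ ?n)"
    unfolding str_x_def str_val_append using assms(2) by (simp add: power_add)
  have "real (str_val b Y) < real b ^ ?n"
    using str_val_less[OF assms(3)] by (metis of_nat_less_iff of_nat_power)
  then show ?thesis
    unfolding x grid_cell_def using assms(1) by (simp add: divide_simps algebra_simps)
qed

lemma card_grid_cells_inside_ge:
  assumes open_sub: "\<And>x. a < x \<Longrightarrow> x < c \<Longrightarrow> x \<in> I" and "0 \<le> a" "c \<le> 1" "B > 0"
  shows "real B * (c - a) - 2 \<le> real (card {j\<in>{..<B}. grid_cell B j \<subseteq> I})"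
proof -
  define lo hi where "lo = nat (\<lfloor>a * B\<rfloor> + 1)" and "hi = nat \<lfloor>c * B\<rfloor>"
  have aB: "0 \<le> a * B"
    using \<open>0 \<le> a\<close> by simp
  have "{lo..<hi} \<subseteq> {j\<in>{..<B}. grid_cell B j \<subseteq> I}"
  proof
    fix j assume j: "j \<in> {lo..<hi}"
    then have "\<lfloor>a * B\<rfloor> + 1 \<le> int j" "int j + 1 \<le> \<lfloor>c * B\<rfloor>"
      using aB unfolding lo_def hi_def by (simp_all add: nat_le_iff zless_nat_eq_int_zless)
    then have lower: "a * B < real j" and upper: "real j + 1 \<le> c * B"
      by linarith+
    have "c * B \<le> B"
      using \<open>c \<le> 1\<close> \<open>B > 0\<close> by simp
    then have "j < B"
      using upper by simp
    moreover have "grid_cell B j \<subseteq> I"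
    proof
      fix x assume "x \<in> grid_cell B j"
      then have "real j \<le> x * B" "x * B < real j + 1"
        using \<open>B > 0\<close> by (auto simp: grid_cell_def field_simps)
      then have "a * B < x * B" "x * B < c * B"
        using lower upper by linarith+
      then show "x \<in> I"
        using \<open>B > 0\<close> by (intro open_sub) simp_all
    qed
    ultimately show "j \<in> {j\<in>{..<B}. grid_cell B j \<subseteq> I}"
      by simp
  qed
  then have "real (card {lo..<hi}) \<le> real (card {j\<in>{..<B}. grid_cell B j \<subseteq> I})"
    by (intro of_nat_mono card_mono) simp_all
  moreover have "real hi \<ge> c * B - 1" "real lo \<le> a * B + 1"
    unfolding lo_def hi_def using aB by linarith+
  then have "real B * (c - a) - 2 \<le> real (card {lo..<hi})"
    by (simp add: algebra_simps)
  ultimately show ?thesis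
    by linarith
qed

lemma card_grid_cells_meeting_le:
  assumes "I \<subseteq> {a..c}" "0 \<le> a" "a \<le> c" "B > 0"
  shows "real (card {j\<in>{..<B}. grid_cell B j \<inter> I \<noteq> {}}) \<le> real B * (c - a) + 2"
proof -
  define lo hi where "lo = nat \<lfloor>a * B\<rfloor>" and "hi = nat \<lfloor>c * B\<rfloor>"
  have "{j\<in>{..<B}. grid_cell B j \<inter> I \<noteq> {}} \<subseteq> {lo..hi}"
  proof
    fix j assume "j \<in> {j\<in>{..<B}. grid_cell B j \<inter> I \<noteq> {}}"
    then obtain x where "x \<in> grid_cell B j" "x \<in> I"
      by auto
    then have "real j \<le> x * B" "x * B < real j + 1" "a \<le> x" "x \<le> c"
      using assms by (auto simp: grid_cell_def field_simps)
    moreover from \<open>a \<le> x\<close> \<open>x \<le> c\<close> have "a * B \<le> x * B" "x * B \<le> c * B"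
      by (simp_all add: mult_right_mono)
    ultimately have "int j \<le> \<lfloor>c * B\<rfloor>" "\<lfloor>a * B\<rfloor> \<le> int j"
      by linarith+
    then show "j \<in> {lo..hi}"
      by (auto simp: lo_def hi_def)
  qed
  then have "real (card {j\<in>{..<B}. grid_cell B j \<inter> I \<noteq> {}}) \<le> real (card {lo..hi})"
    by (intro of_nat_mono card_mono) simp_all
  also have "\<dots> \<le> real B * (c - a) + 2"
  proof -
    have "real (card {lo..hi}) \<le> real hi + 1 - real lo \<or> Suc hi \<le> lo"
      by simp linarith
    moreover have "a * B \<le> c * B" "0 \<le> a * B"
      using assms by (simp_all add: mult_right_mono)
    moreover from this have "real hi \<le> c * B" "a * B - 1 \<le> real lo"
      unfolding lo_def hi_def by linarith+
    ultimately show ?thesis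
      by (auto simp: algebra_simps)
  qed
  finally show ?thesis .
qed

section \<open>Strings with few occurrences\<close>

lemma decseq_tendsto_zeroI:
  fixes r :: "nat \<Rightarrow> real"
  assumes "decseq r" "\<And>n. 0 \<le> r n" "\<And>e. e > 0 \<Longrightarrow> \<exists>N. r N < e"
  shows "r \<longlonglongrightarrow> 0"
proof (rule LIMSEQ_I)
  fix e :: real assume "e > 0"
  then obtain N where "r N < e"
    using assms(3) by blast
  then have "\<forall>n\<ge>N. norm (r n - 0) < e"
    using assms(1,2) by (auto simp: decseq_def) (metis order.strict_trans1)
  then show "\<exists>N. \<forall>n\<ge>N. norm (r n - 0) < e"
    by blast
qed

lemma card_image_Times_le:
  "finite P \<Longrightarrow> finite Q \<Longrightarrow> card (f ` (P \<times> Q)) \<le> card P * card Q"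
  by (metis card_cartesian_product card_image_le finite_cartesian_product)

locale digit_pattern =
  fixes b :: nat and w :: "nat list"
  assumes base_ge_2: "2 \<le> b" and pattern_nonempty: "w \<noteq> []" and pattern_digits: "set w \<subseteq> {..<b}"
begin

lemma base_pos: "real b > 0"
  using base_ge_2 by simp

lemma pattern_in_strings: "w \<in> strings b (length w)"
  using pattern_digits by (simp add: strings_def)

definition few_occ :: "nat \<Rightarrow> nat \<Rightarrow> nat" where
  "few_occ j N = card {Y\<in>strings b N. occ w Y < j}"

definition few_occ_frac :: "nat \<Rightarrow> nat \<Rightarrow> real" where
  "few_occ_frac j N = real (few_occ j N) / real b ^ N"

lemma few_occ_frac_nonneg: "0 \<le> few_occ_frac j N"
  by (simp add: few_occ_frac_def)

lemma few_occ_frac_le_1: "few_occ_frac j N \<le> 1"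
proof -
  have "few_occ j N \<le> b ^ N"
    unfolding few_occ_def by (metis (no_types, lifting) card_strings card_mono finite_strings
        mem_Collect_eq subsetI)
  then show ?thesis
    using base_pos by (simp add: few_occ_frac_def divide_le_eq_1)
qed

lemma few_occ_Suc_le: "few_occ j (Suc N) \<le> few_occ j N * b"
proof -
  have "{Y\<in>strings b (Suc N). occ w Y < j} \<subseteq>
      (\<lambda>(A, d). A @ [d]) ` ({A\<in>strings b N. occ w A < j} \<times> {..<b})"
  proof
    fix Y assume Y: "Y \<in> {Y\<in>strings b (Suc N). occ w Y < j}"
    then have "Y \<noteq> []"
      by (auto simp: strings_def)
    then have Y_eq: "Y = butlast Y @ [last Y]"
      by simp
    have "occ w (butlast Y) \<le> occ w Y"
      using occ_le_occ_append[OF pattern_nonempty, of "butlast Y" "[last Y]"] Y_eq by simp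
    moreover have "last Y < b" "set (butlast Y) \<subseteq> {..<b}"
      using Y last_in_set[OF \<open>Y \<noteq> []\<close>] by (auto simp: strings_def dest: in_set_butlastD)
    ultimately show "Y \<in> (\<lambda>(A, d). A @ [d]) ` ({A\<in>strings b N. occ w A < j} \<times> {..<b})"
      using Y by (auto simp: strings_def intro!: image_eqI[of _ _ "(butlast Y, last Y)"] Y_eq)
  qed
  then have "few_occ j (Suc N) \<le> card ((\<lambda>(A, d). A @ [d]) ` ({A\<in>strings b N. occ w A < j} \<times> {..<b}))"
    unfolding few_occ_def by (intro card_mono) auto
  also have "\<dots> \<le> few_occ j N * b"
    unfolding few_occ_def
    using card_image_Times_le[of "{A\<in>strings b N. occ w A < j}" "{..<b}" "\<lambda>(A, d). A @ [d]"] by simp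
  finally show ?thesis .
qed

lemma decseq_few_occ_frac: "decseq (few_occ_frac j)"
proof (rule decseq_SucI)
  fix N
  have "real (few_occ j (Suc N)) \<le> real (few_occ j N) * real b"
    using few_occ_Suc_le[of j N] by (metis of_nat_le_iff of_nat_mult)
  then show "few_occ_frac j (Suc N) \<le> few_occ_frac j N"
    using base_pos by (simp add: few_occ_frac_def divide_simps)
qed

text \<open>A string avoiding \<open>w\<close> has no block equal to \<open>w\<close>; looking at consecutive blocks of length
  \<open>|w|\<close> makes the proportion of such strings decay geometrically.\<close>

lemma few_occ_1_add_length_le: "few_occ 1 (N + length w) \<le> few_occ 1 N * (b ^ length w - 1)"
proof -
  let ?p = "length w"
  have "{Y\<in>strings b (N + ?p). occ w Y < 1} \<subseteq>
      (\<lambda>(A, B). A @ B) ` ({A\<in>strings b N. occ w A < 1} \<times> (strings b ?p - {w}))"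
  proof
    fix Y assume Y: "Y \<in> {Y\<in>strings b (N + ?p). occ w Y < 1}"
    have "occ w (take N Y) \<le> occ w Y"
      using occ_le_occ_append[OF pattern_nonempty, of "take N Y" "drop N Y"] by simp
    moreover have "drop N Y \<noteq> w"
    proof
      assume "drop N Y = w"
      then have "occ w (take N Y) + occ w w \<le> occ w Y"
        using occ_append_ge[OF pattern_nonempty, of "take N Y" w] by (metis append_take_drop_id)
      then show False
        using Y occ_self[OF pattern_nonempty] by simp
    qed
    ultimately show "Y \<in> (\<lambda>(A, B). A @ B) ` ({A\<in>strings b N. occ w A < 1} \<times> (strings b ?p - {w}))"
      using Y by (auto simp: strings_def intro!: image_eqI[of _ _ "(take N Y, drop N Y)"]
          dest: in_set_takeD in_set_dropD)
  qed
  then have "few_occ 1 (N + ?p) \<le>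
      card ((\<lambda>(A, B). A @ B) ` ({A\<in>strings b N. occ w A < 1} \<times> (strings b ?p - {w})))"
    unfolding few_occ_def by (intro card_mono) auto
  also have "\<dots> \<le> few_occ 1 N * card (strings b ?p - {w})"
    unfolding few_occ_def
    using card_image_Times_le[of "{A\<in>strings b N. occ w A < 1}" "strings b ?p - {w}" "\<lambda>(A, B). A @ B"]
    by simp
  also have "card (strings b ?p - {w}) = b ^ ?p - 1"
    using pattern_in_strings by simp
  finally show ?thesis .
qed

lemma few_occ_frac_1_mult_le: "few_occ_frac 1 (m * length w) \<le> (1 - 1 / real b ^ length w) ^ m"
proof (induction m)
  case 0
  then show ?case
    using few_occ_frac_le_1 by simp
next
  case (Suc m)
  let ?q = "1 - 1 / real b ^ length w"
  have "real (few_occ 1 (m * length w + length w)) \<le>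
      real (few_occ 1 (m * length w)) * real (b ^ length w - 1)"
    using few_occ_1_add_length_le by (simp only: of_nat_mult[symmetric] of_nat_le_iff)
  also have "real (b ^ length w - 1) = real b ^ length w - 1"
    using base_ge_2 by (simp add: of_nat_diff)
  finally have "real (few_occ 1 (m * length w + length w)) \<le>
      real (few_occ 1 (m * length w)) * (real b ^ length w - 1)" .
  then have "few_occ_frac 1 (m * length w + length w) \<le> few_occ_frac 1 (m * length w) * ?q"
    using base_pos by (simp add: few_occ_frac_def power_add divide_simps)
  also have "\<dots> \<le> ?q ^ m * ?q"
    using Suc base_ge_2 by (intro mult_right_mono) (simp_all add: divide_simps)
  finally show ?case
    by (simp add: add.commute mult.commute)
qed

lemma few_occ_frac_1_tendsto_0: "few_occ_frac 1 \<longlonglongrightarrow> 0"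
proof (rule decseq_tendsto_zeroI[OF decseq_few_occ_frac few_occ_frac_nonneg])
  fix e :: real assume "e > 0"
  let ?q = "1 - 1 / real b ^ length w"
  have "0 \<le> ?q" "?q < 1"
    using base_ge_2 by (simp_all add: divide_simps)
  then have "(\<lambda>m. ?q ^ m) \<longlonglongrightarrow> 0"
    by (intro LIMSEQ_power_zero) simp
  then have "eventually (\<lambda>m. ?q ^ m < e) sequentially"
    using \<open>e > 0\<close> by (rule order_tendstoD(2))
  then obtain m where "?q ^ m < e"
    unfolding eventually_sequentially by blast
  then show "\<exists>N. few_occ_frac 1 N < e"
    using few_occ_frac_1_mult_le[of m] by (intro exI[of _ "m * length w"]) simp
qed

text \<open>A string of length \<open>2N\<close> with at most \<open>j\<close> occurrences has a first half avoiding \<open>w\<close> or a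
  second half with fewer than \<open>j\<close> occurrences.\<close>

lemma few_occ_Suc_double_le: "few_occ (Suc j) (N + N) \<le> few_occ 1 N * b ^ N + b ^ N * few_occ j N"
proof -
  let ?U1 = "{A\<in>strings b N. occ w A < 1} \<times> strings b N"
  let ?U2 = "strings b N \<times> {B\<in>strings b N. occ w B < j}"
  have "{Y\<in>strings b (N + N). occ w Y < Suc j} \<subseteq> (\<lambda>(A, B). A @ B) ` ?U1 \<union> (\<lambda>(A, B). A @ B) ` ?U2"
  proof
    fix Y assume Y: "Y \<in> {Y\<in>strings b (N + N). occ w Y < Suc j}"
    have "occ w (take N Y) + occ w (drop N Y) \<le> occ w Y"
      using occ_append_ge[OF pattern_nonempty, of "take N Y" "drop N Y"] by simp
    then have "occ w (take N Y) < 1 \<or> occ w (drop N Y) < j"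
      using Y by auto
    moreover have "take N Y \<in> strings b N" "drop N Y \<in> strings b N"
      using Y by (auto simp: strings_def dest: in_set_takeD in_set_dropD)
    ultimately show "Y \<in> (\<lambda>(A, B). A @ B) ` ?U1 \<union> (\<lambda>(A, B). A @ B) ` ?U2"
      by (auto intro!: image_eqI[of _ _ "(take N Y, drop N Y)"])
  qed
  then have "few_occ (Suc j) (N + N) \<le> card ((\<lambda>(A, B). A @ B) ` ?U1 \<union> (\<lambda>(A, B). A @ B) ` ?U2)"
    unfolding few_occ_def by (intro card_mono) auto
  also have "\<dots> \<le> card ((\<lambda>(A, B). A @ B) ` ?U1) + card ((\<lambda>(A, B). A @ B) ` ?U2)"
    by (rule card_Un_le)
  also have "\<dots> \<le> few_occ 1 N * b ^ N + b ^ N * few_occ j N"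
    unfolding few_occ_def
    using card_image_Times_le[of "{A\<in>strings b N. occ w A < 1}" "strings b N" "\<lambda>(A, B). A @ B"]
      card_image_Times_le[of "strings b N" "{B\<in>strings b N. occ w B < j}" "\<lambda>(A, B). A @ B"]
    by simp
  finally show ?thesis .
qed

lemma few_occ_frac_tendsto_0: "few_occ_frac j \<longlonglongrightarrow> 0"
proof (induction j)
  case 0
  then show ?case
    by (simp add: few_occ_frac_def few_occ_def)
next
  case (Suc j)
  have double: "few_occ_frac (Suc j) (N + N) \<le> few_occ_frac 1 N + few_occ_frac j N" for N
  proof -
    have "real (few_occ (Suc j) (N + N)) \<le>
        real (few_occ 1 N) * real b ^ N + real b ^ N * real (few_occ j N)"
      using few_occ_Suc_double_le[of j N]
      by (simp only: of_nat_add[symmetric] of_nat_mult[symmetric] of_nat_power[symmetric] of_nat_le_iff)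
    then show ?thesis
      using base_pos by (simp add: few_occ_frac_def power_add divide_simps) (simp add: algebra_simps)
  qed
  show ?case
  proof (rule decseq_tendsto_zeroI[OF decseq_few_occ_frac few_occ_frac_nonneg])
    fix e :: real assume "e > 0"
    have "e / 2 > 0"
      using \<open>e > 0\<close> by simp
    have "eventually (\<lambda>N. few_occ_frac 1 N < e / 2) sequentially"
      using few_occ_frac_1_tendsto_0 \<open>e / 2 > 0\<close> by (rule order_tendstoD(2))
    moreover have "eventually (\<lambda>N. few_occ_frac j N < e / 2) sequentially"
      using Suc \<open>e / 2 > 0\<close> by (rule order_tendstoD(2))
    ultimately have "eventually (\<lambda>N. few_occ_frac 1 N < e / 2 \<and> few_occ_frac j N < e / 2) sequentially"
      by (rule eventually_conj)
    then obtain N where "few_occ_frac 1 N < e / 2" "few_occ_frac j N < e / 2"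
      unfolding eventually_sequentially by blast
    then show "\<exists>N. few_occ_frac (Suc j) N < e"
      using double[of N] by (intro exI[of _ "N + N"]) simp
  qed
qed

end

section \<open>Weights of extension sets\<close>

context digit_pattern
begin

definition str_weight :: "nat list \<Rightarrow> ennreal" where
  "str_weight X = ennreal (1 / real b ^ length X)"

lemma str_weight_append: "str_weight (X @ Y) = str_weight X * str_weight Y"
  unfolding str_weight_def using base_pos by (simp add: power_add ennreal_mult[symmetric])

definition extensions :: "nat list \<Rightarrow> nat \<Rightarrow> nat list set" where
  "extensions s k = {Y. set Y \<subseteq> {..<b} \<and> occ w (s @ Y) = k}"

definition first_passages :: "nat list \<Rightarrow> nat \<Rightarrow> nat list set" where
  "first_passages s k = {Y. set Y \<subseteq> {..<b} \<and> occ w (s @ Y) = k \<and> suffix w (s @ Y)}"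

definition final_tails :: "nat list set" where
  "final_tails = {Y. set Y \<subseteq> {..<b} \<and> occ w (w @ Y) = 1}"

lemma first_passages_unique:
  assumes "Y \<in> first_passages s k" "Y' \<in> first_passages s k" "Y @ Z = Y' @ Z'"
  shows "Y = Y'"
proof -
  have no_ext: "us = []" if "V \<in> first_passages s k" "V @ us \<in> first_passages s k" for V us
    using that suffix_extension_adds_occ[OF pattern_nonempty, of "s @ V" us]
    by (auto simp: first_passages_def)
  obtain us where "Y = Y' @ us \<or> Y @ us = Y'"
    using assms(3) append_eq_append_conv2 by metis
  then show ?thesis
    using no_ext assms(1,2) by auto
qed

lemma bij_betw_extensions:
  assumes "occ w s < k"
  shows "bij_betw (\<lambda>(Y, Z). Y @ Z) (first_passages s k \<times> final_tails) (extensions s k)"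
proof (rule bij_betw_imageI)
  show "inj_on (\<lambda>(Y, Z). Y @ Z) (first_passages s k \<times> final_tails)"
    by (auto intro!: inj_onI dest: first_passages_unique)
  show "(\<lambda>(Y, Z). Y @ Z) ` (first_passages s k \<times> final_tails) = extensions s k"
  proof (intro set_eqI iffI)
    fix X assume "X \<in> (\<lambda>(Y, Z). Y @ Z) ` (first_passages s k \<times> final_tails)"
    then obtain Y Z where X: "X = Y @ Z" "Y \<in> first_passages s k" "Z \<in> final_tails"
      by auto
    then have "occ w ((s @ Y) @ Z) + 1 = occ w (s @ Y) + occ w (w @ Z)"
      by (intro occ_append_after_suffix[OF pattern_nonempty]) (auto simp: first_passages_def)
    then show "X \<in> extensions s k"
      using X by (auto simp: first_passages_def final_tails_def extensions_def)
  next
    fix X assume X: "X \<in> extensions s k"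
    then obtain j where j: "j \<le> length X" "occ w (s @ take j X) = k" "suffix w (s @ take j X)"
      using first_passage_exists[OF pattern_nonempty assms, of X] by (auto simp: extensions_def)
    then have "occ w ((s @ take j X) @ drop j X) + 1 = occ w (s @ take j X) + occ w (w @ drop j X)"
      by (intro occ_append_after_suffix[OF pattern_nonempty])
    then have "occ w (w @ drop j X) = 1"
      using X j by (simp add: extensions_def)
    then show "X \<in> (\<lambda>(Y, Z). Y @ Z) ` (first_passages s k \<times> final_tails)"
      using X j
      by (auto simp: first_passages_def final_tails_def extensions_def
          intro!: image_eqI[of _ _ "(take j X, drop j X)"] dest: in_set_takeD in_set_dropD)
  qed
qed

lemma finite_strings_le: "finite {Y. set Y \<subseteq> {..<b} \<and> length Y \<le> N}"
  by (rule finite_lists_length_le) simp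

lemma card_disjoint_blocks:
  fixes F :: "nat list set" and g :: "nat list \<Rightarrow> nat list \<Rightarrow> nat list" and n :: "nat list \<Rightarrow> nat"
  assumes "finite F" "\<And>Y. Y \<in> F \<Longrightarrow> inj (g Y)"
    and "\<And>Y Y' A A'. Y \<in> F \<Longrightarrow> Y' \<in> F \<Longrightarrow> A \<in> strings b (n Y) \<Longrightarrow> A' \<in> strings b (n Y')
      \<Longrightarrow> g Y A = g Y' A' \<Longrightarrow> Y = Y'"
  shows "card (\<Union>Y\<in>F. g Y ` strings b (n Y)) = (\<Sum>Y\<in>F. b ^ n Y)"
proof -
  have "card (\<Union>Y\<in>F. g Y ` strings b (n Y)) = (\<Sum>Y\<in>F. card (g Y ` strings b (n Y)))"
    using assms by (intro card_UN_disjoint) auto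
  also have "\<dots> = (\<Sum>Y\<in>F. b ^ n Y)"
    using assms(2) by (intro sum.cong refl) (metis card_image card_strings inj_on_subset subset_UNIV)
  finally show ?thesis .
qed

text \<open>Counting strings of length \<open>N\<close> by their first passage to \<open>k\<close> occurrences, and strings of
  length \<open>N + |w|\<close> by their last occurrence of \<open>w\<close>.\<close>

lemma card_strings_reaching:
  assumes "occ w s < k"
  shows "card {Y\<in>strings b N. k \<le> occ w (s @ Y)} =
    (\<Sum>Y\<in>{Y\<in>first_passages s k. length Y \<le> N}. b ^ (N - length Y))"
proof -
  let ?F = "{Y\<in>first_passages s k. length Y \<le> N}"
  have "{Y\<in>strings b N. k \<le> occ w (s @ Y)} = (\<Union>Y\<in>?F. (\<lambda>Z. Y @ Z) ` strings b (N - length Y))"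
  proof (intro set_eqI iffI)
    fix X assume X: "X \<in> {Y\<in>strings b N. k \<le> occ w (s @ Y)}"
    then obtain j where "j \<le> length X" "occ w (s @ take j X) = k" "suffix w (s @ take j X)"
      using first_passage_exists[OF pattern_nonempty assms, of X] by auto
    then have "take j X \<in> ?F" "drop j X \<in> strings b (N - length (take j X))"
      using X by (auto simp: first_passages_def strings_def dest: in_set_takeD in_set_dropD)
    then show "X \<in> (\<Union>Y\<in>?F. (\<lambda>Z. Y @ Z) ` strings b (N - length Y))"
      by (auto intro!: bexI[of _ "take j X"] image_eqI[of _ _ "drop j X"])
  next
    fix X assume "X \<in> (\<Union>Y\<in>?F. (\<lambda>Z. Y @ Z) ` strings b (N - length Y))"
    then obtain Y Z where X: "X = Y @ Z" "Y \<in> ?F" "Z \<in> strings b (N - length Y)"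
      by auto
    have "occ w (s @ Y) \<le> occ w ((s @ Y) @ Z)"
      by (rule occ_le_occ_append[OF pattern_nonempty])
    then show "X \<in> {Y\<in>strings b N. k \<le> occ w (s @ Y)}"
      using X by (auto simp: first_passages_def strings_def)
  qed
  also have "card \<dots> = (\<Sum>Y\<in>?F. b ^ (N - length Y))"
  proof (rule card_disjoint_blocks)
    show "finite ?F"
      by (rule finite_subset[OF _ finite_strings_le[of N]]) (auto simp: first_passages_def)
  qed (auto simp: inj_def dest: first_passages_unique)
  finally show ?thesis .
qed

lemma card_strings_containing:
  "card {X\<in>strings b (N + length w). 1 \<le> occ w X} =
    (\<Sum>Z\<in>{Z\<in>final_tails. length Z \<le> N}. b ^ (N - length Z))"
proof -
  let ?F = "{Z\<in>final_tails. length Z \<le> N}"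
  have "{X\<in>strings b (N + length w). 1 \<le> occ w X} =
      (\<Union>Z\<in>?F. (\<lambda>A. A @ w @ Z) ` strings b (N - length Z))"
  proof (intro set_eqI iffI)
    fix X assume X: "X \<in> {X\<in>strings b (N + length w). 1 \<le> occ w X}"
    then obtain j where j: "j \<le> length X" "occ w (take j X) = occ w X" "suffix w (take j X)"
      using first_passage_exists[OF pattern_nonempty, of "[]" "occ w X" X] occ_Nil[OF pattern_nonempty]
      by auto
    then obtain A where A: "take j X = A @ w"
      by (auto simp: suffix_def)
    define Z where "Z = drop j X"
    have X_eq: "X = A @ w @ Z"
      using A unfolding Z_def by (metis append_assoc append_take_drop_id)
    have "occ w ((A @ w) @ Z) + 1 = occ w (A @ w) + occ w (w @ Z)"
      by (intro occ_append_after_suffix[OF pattern_nonempty] suffix_appendI) simp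
    then have "occ w (w @ Z) = 1"
      using j(2) A X_eq by simp
    moreover have "set A \<subseteq> set X" "set Z \<subseteq> set X"
      "length X = length A + length w + length Z"
      using arg_cong[OF X_eq, of set] arg_cong[OF X_eq, of length] by auto
    ultimately have "Z \<in> ?F" "A \<in> strings b (N - length Z)"
      using X by (auto simp: final_tails_def strings_def)
    with X_eq show "X \<in> (\<Union>Z\<in>?F. (\<lambda>A. A @ w @ Z) ` strings b (N - length Z))"
      by blast
  next
    fix X assume "X \<in> (\<Union>Z\<in>?F. (\<lambda>A. A @ w @ Z) ` strings b (N - length Z))"
    then obtain Z A where X: "X = A @ w @ Z" "Z \<in> ?F" "A \<in> strings b (N - length Z)"
      by auto
    have "occ w A + occ w (w @ Z) \<le> occ w X"
      unfolding X(1) by (rule occ_append_ge[OF pattern_nonempty])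
    then show "X \<in> {X\<in>strings b (N + length w). 1 \<le> occ w X}"
      using X pattern_digits by (auto simp: final_tails_def strings_def)
  qed
  also have "card \<dots> = (\<Sum>Z\<in>?F. b ^ (N - length Z))"
  proof (rule card_disjoint_blocks)
    show "finite ?F"
      by (rule finite_subset[OF _ finite_strings_le[of N]]) (auto simp: final_tails_def)
    fix Z Z' A A' assume Z: "Z \<in> ?F" "Z' \<in> ?F"
      and A: "A \<in> strings b (N - length Z)" "A' \<in> strings b (N - length Z')"
      and eq: "A @ w @ Z = A' @ w @ Z'"
    text \<open>Both \<open>A @ w\<close> and \<open>A' @ w\<close> are the first passage to the last occurrence of \<open>w\<close>.\<close>
    have "occ w ((A @ w) @ Z) + 1 = occ w (A @ w) + occ w (w @ Z)"
      "occ w ((A' @ w) @ Z') + 1 = occ w (A' @ w) + occ w (w @ Z')"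
      by (intro occ_append_after_suffix[OF pattern_nonempty] suffix_appendI; simp)+
    then have "A @ w \<in> first_passages [] (occ w (A @ w @ Z))"
      "A' @ w \<in> first_passages [] (occ w (A @ w @ Z))"
      using Z A eq pattern_digits
      by (auto simp: first_passages_def final_tails_def strings_def intro: suffix_appendI)
    then show "Z = Z'"
      using first_passages_unique eq by (metis append.assoc same_append_eq)
  qed (simp add: inj_def)
  finally show ?thesis .
qed

lemma sum_inverse_powers_eq:
  assumes "finite F" "\<And>Y. Y \<in> F \<Longrightarrow> length Y \<le> N"
  shows "(\<Sum>Y\<in>F. 1 / real b ^ length Y) = real (\<Sum>Y\<in>F. b ^ (N - length Y)) / real b ^ N"
proof -
  have "(\<Sum>Y\<in>F. 1 / real b ^ length Y) = (\<Sum>Y\<in>F. real b ^ (N - length Y) / real b ^ N)"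
    using assms(2) base_pos by (intro sum.cong refl) (simp add: power_diff divide_simps)
  then show ?thesis
    by (simp add: sum_divide_distrib)
qed

lemma card_filter_add_card_filter_not:
  "finite A \<Longrightarrow> card {x\<in>A. P x} + card {x\<in>A. \<not> P x} = card A"
  by (subst card_Un_disjoint[symmetric]) (auto intro: arg_cong[where f = card])

lemma first_passages_partial_sums_tendsto:
  assumes "occ w s < k"
  shows "(\<lambda>N. \<Sum>Y\<in>{Y\<in>first_passages s k. length Y \<le> N}. 1 / real b ^ length Y) \<longlonglongrightarrow> 1"
proof -
  define short where "short N = real (card {Y\<in>strings b N. occ w (s @ Y) < k}) / real b ^ N" for N
  have partial_sum: "(\<Sum>Y\<in>{Y\<in>first_passages s k. length Y \<le> N}. 1 / real b ^ length Y) = 1 - short N"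
    for N
  proof -
    have "finite {Y\<in>first_passages s k. length Y \<le> N}"
      by (rule finite_subset[OF _ finite_strings_le[of N]]) (auto simp: first_passages_def)
    then have "(\<Sum>Y\<in>{Y\<in>first_passages s k. length Y \<le> N}. 1 / real b ^ length Y) =
        real (card {Y\<in>strings b N. k \<le> occ w (s @ Y)}) / real b ^ N"
      unfolding card_strings_reaching[OF assms] by (rule sum_inverse_powers_eq) simp
    moreover have "card {Y\<in>strings b N. k \<le> occ w (s @ Y)} +
        card {Y\<in>strings b N. occ w (s @ Y) < k} = b ^ N"
      using card_filter_add_card_filter_not[OF finite_strings, of b N "\<lambda>Y. k \<le> occ w (s @ Y)"]
      by (simp add: not_le)
    then have "real (card {Y\<in>strings b N. k \<le> occ w (s @ Y)} +
        card {Y\<in>strings b N. occ w (s @ Y) < k}) = real (b ^ N)"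
      by (rule arg_cong)
    then have "real (card {Y\<in>strings b N. k \<le> occ w (s @ Y)}) =
        real b ^ N - real (card {Y\<in>strings b N. occ w (s @ Y) < k})"
      by simp
    ultimately show ?thesis
      using base_pos by (simp add: short_def diff_divide_distrib)
  qed
  have short_le: "short N \<le> few_occ_frac (k - occ w s) N" for N
  proof -
    have "{Y\<in>strings b N. occ w (s @ Y) < k} \<subseteq> {Y\<in>strings b N. occ w Y < k - occ w s}"
    proof (intro subsetI CollectI conjI)
      fix Y assume Y: "Y \<in> {Y\<in>strings b N. occ w (s @ Y) < k}"
      then show "Y \<in> strings b N"
        by simp
      have "occ w s + occ w Y \<le> occ w (s @ Y)"
        by (rule occ_append_ge[OF pattern_nonempty])
      then show "occ w Y < k - occ w s"
        using Y by (auto simp: less_diff_conv)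
    qed
    then have "card {Y\<in>strings b N. occ w (s @ Y) < k} \<le> few_occ (k - occ w s) N"
      unfolding few_occ_def by (intro card_mono) simp_all
    then show ?thesis
      unfolding short_def few_occ_frac_def using base_pos by (simp add: divide_right_mono)
  qed
  have "short \<longlonglongrightarrow> 0"
  proof (rule tendsto_sandwich[of "\<lambda>_. 0" short _ "few_occ_frac (k - occ w s)"])
    show "eventually (\<lambda>N. 0 \<le> short N) sequentially"
      by (simp add: short_def)
    show "eventually (\<lambda>N. short N \<le> few_occ_frac (k - occ w s) N) sequentially"
      using short_le by simp
  qed (simp_all add: few_occ_frac_tendsto_0)
  then have "(\<lambda>N. 1 - short N) \<longlonglongrightarrow> 1 - 0"
    by (intro tendsto_diff tendsto_const)
  then show ?thesis
    by (simp add: partial_sum)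
qed

lemma final_tails_partial_sums_tendsto:
  "(\<lambda>N. \<Sum>Z\<in>{Z\<in>final_tails. length Z \<le> N}. 1 / real b ^ length Z) \<longlonglongrightarrow> real b ^ length w"
proof -
  let ?p = "length w"
  have partial_sum: "(\<Sum>Z\<in>{Z\<in>final_tails. length Z \<le> N}. 1 / real b ^ length Z) =
      real b ^ ?p * (1 - few_occ_frac 1 (N + ?p))" for N
  proof -
    have "finite {Z\<in>final_tails. length Z \<le> N}"
      by (rule finite_subset[OF _ finite_strings_le[of N]]) (auto simp: final_tails_def)
    then have "(\<Sum>Z\<in>{Z\<in>final_tails. length Z \<le> N}. 1 / real b ^ length Z) =
        real (card {X\<in>strings b (N + ?p). 1 \<le> occ w X}) / real b ^ N"
      unfolding card_strings_containing by (rule sum_inverse_powers_eq) simp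
    moreover have "card {X\<in>strings b (N + ?p). 1 \<le> occ w X} + few_occ 1 (N + ?p) = b ^ (N + ?p)"
      using card_filter_add_card_filter_not[OF finite_strings, of b "N + ?p" "\<lambda>X. 1 \<le> occ w X"]
      unfolding few_occ_def by (simp add: not_le)
    then have "real (card {X\<in>strings b (N + ?p). 1 \<le> occ w X} + few_occ 1 (N + ?p)) =
        real (b ^ (N + ?p))"
      by (rule arg_cong)
    then have "real (card {X\<in>strings b (N + ?p). 1 \<le> occ w X}) =
        real b ^ (N + ?p) - real (few_occ 1 (N + ?p))"
      by simp
    ultimately show ?thesis
      using base_pos by (simp add: few_occ_frac_def power_add divide_simps)
  qed
  have "(\<lambda>N. few_occ_frac 1 (N + ?p)) \<longlonglongrightarrow> 0"
    using few_occ_frac_tendsto_0 by (rule LIMSEQ_ignore_initial_segment)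
  then have "(\<lambda>N. real b ^ ?p * (1 - few_occ_frac 1 (N + ?p))) \<longlonglongrightarrow> real b ^ ?p * (1 - 0)"
    by (intro tendsto_intros)
  then show ?thesis
    unfolding partial_sum by simp
qed

lemma infsum_str_weight_eq_lim:
  assumes "A \<subseteq> {Y. set Y \<subseteq> {..<b}}"
    and "(\<lambda>N. \<Sum>Y\<in>{Y\<in>A. length Y \<le> N}. 1 / real b ^ length Y) \<longlonglongrightarrow> L"
  shows "infsum str_weight A = ennreal L"
  unfolding str_weight_def
proof (rule infsum_ennreal_eq_lim_truncations[OF _ _ assms(2)])
  show "finite {Y\<in>A. length Y \<le> N}" for N
    by (rule finite_subset[OF _ finite_strings_le[of N]]) (use assms(1) in auto)
qed simp

lemma infsum_first_passages: "occ w s < k \<Longrightarrow> infsum str_weight (first_passages s k) = 1"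
  using infsum_str_weight_eq_lim[OF _ first_passages_partial_sums_tendsto]
  by (auto simp: first_passages_def)

lemma infsum_final_tails: "infsum str_weight final_tails = ennreal (real b ^ length w)"
  using infsum_str_weight_eq_lim[OF _ final_tails_partial_sums_tendsto]
  by (auto simp: final_tails_def)

lemma infsum_extensions:
  assumes "occ w s < k"
  shows "infsum str_weight (extensions s k) = ennreal (real b ^ length w)"
proof -
  let ?cat = "\<lambda>(Y, Z). Y @ Z"
  have bij: "bij_betw ?cat (first_passages s k \<times> final_tails) (extensions s k)"
    by (rule bij_betw_extensions[OF assms])
  then have "infsum str_weight (extensions s k) =
      infsum (str_weight \<circ> ?cat) (first_passages s k \<times> final_tails)"
    by (metis bij_betw_def infsum_reindex)
  also have "\<dots> = infsum (\<lambda>(Y, Z). str_weight Y * str_weight Z) (first_passages s k \<times> final_tails)"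
    by (intro infsum_cong) (auto simp: str_weight_append)
  also have "\<dots> = infsum str_weight (first_passages s k) * infsum str_weight final_tails"
    by (rule infsum_ennreal_product)
  finally show ?thesis
    using infsum_first_passages[OF assms] infsum_final_tails by simp
qed

end

section \<open>The measures \<open>\<mu>\<^sub>k\<close>\<close>

lemma is_interval_between_Inf_Sup:
  fixes I :: "real set"
  assumes "is_interval I" "I \<noteq> {}" "bdd_below I" "bdd_above I" "Inf I < x" "x < Sup I"
  shows "x \<in> I"
proof -
  obtain y z where "y \<in> I" "y < x" "z \<in> I" "x < z"
    using assms cInf_less_iff less_cSup_iff by metis
  then show ?thesis
    using assms(1) unfolding is_interval_1 by (meson less_imp_le)
qed

context digit_pattern
begin

definition extensions_in :: "nat \<Rightarrow> real set \<Rightarrow> nat list \<Rightarrow> nat list set" where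
  "extensions_in k I u = {Y\<in>extensions u k. str_x b (u @ Y) \<in> I}"

lemma str_weight_strings: "u \<in> strings b m \<Longrightarrow> str_weight u = ennreal (1 / real b ^ m)"
  by (simp add: str_weight_def strings_def)

text \<open>Since \<open>w\<close> occurs at most \<open>|X|\<close> times in \<open>X\<close>, every string counted by \<open>\<mu>\<^sub>k\<close> is longer
  than \<open>m < k\<close> and splits uniquely into a prefix of length \<open>m\<close> and an extension.\<close>

lemma mu_eq_sum_prefixes:
  assumes "m < k"
  shows "mu b w k I = (\<Sum>u\<in>strings b m. str_weight u * infsum str_weight (extensions_in k I u))"
proof -
  let ?cat = "\<lambda>(u, Y). u @ Y"
  have eq: "{X. is_string b X \<and> occ w X = k \<and> str_x b X \<in> I} =
      ?cat ` Sigma (strings b m) (extensions_in k I)"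
  proof (intro set_eqI iffI)
    fix X assume X: "X \<in> {X. is_string b X \<and> occ w X = k \<and> str_x b X \<in> I}"
    then have "m < length X"
      using occ_le_length[OF pattern_nonempty, of X] assms by simp
    then have "take m X \<in> strings b m" "drop m X \<in> extensions_in k I (take m X)"
      using X by (auto simp: strings_def extensions_in_def extensions_def is_string_iff
          dest: in_set_takeD in_set_dropD)
    then show "X \<in> ?cat ` Sigma (strings b m) (extensions_in k I)"
      by (auto intro!: image_eqI[of _ _ "(take m X, drop m X)"])
  qed (auto simp: strings_def extensions_in_def extensions_def is_string_iff)
  have "inj_on ?cat (Sigma (strings b m) (extensions_in k I))"
    by (auto simp: strings_def inj_on_def)
  then have "mu b w k I = infsum (str_weight \<circ> ?cat) (Sigma (strings b m) (extensions_in k I))"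
    unfolding mu_def eq str_weight_def[symmetric] by (rule infsum_reindex)
  also have "\<dots> = infsum (\<lambda>(u, Y). str_weight u * str_weight Y) (Sigma (strings b m) (extensions_in k I))"
    by (intro infsum_cong) (auto simp: str_weight_append)
  also have "\<dots> = (\<Sum>u\<in>strings b m. str_weight u * infsum str_weight (extensions_in k I u))"
    by (simp add: infsum_ennreal_Sigma infsum_ennreal_cmult_right)
  finally show ?thesis .
qed

lemma extensions_in_eq_extensions:
  assumes "u \<in> strings b m" "grid_cell (b ^ m) (str_val b u) \<subseteq> I"
  shows "extensions_in k I u = extensions u k"
  using assms str_x_in_grid_cell[of b u m] base_ge_2
  by (auto simp: extensions_in_def extensions_def strings_def)

lemma extensions_in_empty:
  assumes "u \<in> strings b m" "grid_cell (b ^ m) (str_val b u) \<inter> I = {}"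
  shows "extensions_in k I u = {}"
  using assms str_x_in_grid_cell[of b u m] base_ge_2
  by (auto simp: extensions_in_def extensions_def strings_def)

lemma sum_strings_str_val: "(\<Sum>u\<in>strings b m. g (str_val b u)) = (\<Sum>j<b ^ m. g j)"
  using sum.reindex_bij_betw[OF bij_betw_str_val, of g b m] by simp

lemma mu_le_card_meeting_cells:
  assumes "m < k"
  shows "mu b w k I \<le>
    of_nat (card {j\<in>{..<b ^ m}. grid_cell (b ^ m) j \<inter> I \<noteq> {}}) * ennreal (real b ^ length w / real b ^ m)"
proof -
  let ?T = "{j\<in>{..<b ^ m}. grid_cell (b ^ m) j \<inter> I \<noteq> {}}"
  let ?c = "ennreal (real b ^ length w / real b ^ m)"
  have "str_weight u * infsum str_weight (extensions_in k I u) \<le> (if str_val b u \<in> ?T then ?c else 0)"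
    if u: "u \<in> strings b m" for u
  proof (cases "grid_cell (b ^ m) (str_val b u) \<inter> I = {}")
    case False
    have "occ w u < k"
      using occ_le_length[OF pattern_nonempty, of u] u assms by (simp add: strings_def)
    have "infsum str_weight (extensions_in k I u) \<le> infsum str_weight (extensions u k)"
      by (rule infsum_ennreal_mono_set) (auto simp: extensions_in_def)
    also have "\<dots> = ennreal (real b ^ length w)"
      by (rule infsum_extensions[OF \<open>occ w u < k\<close>])
    finally have "infsum str_weight (extensions_in k I u) \<le> ennreal (real b ^ length w)" .
    then have "str_weight u * infsum str_weight (extensions_in k I u) \<le>
        ennreal (1 / real b ^ m) * ennreal (real b ^ length w)"
      unfolding str_weight_strings[OF u] by (rule mult_left_mono) simp
    also have "\<dots> = ?c"
      using base_pos by (simp add: ennreal_mult[symmetric])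
    finally have "str_weight u * infsum str_weight (extensions_in k I u) \<le> ?c" .
    moreover have "str_val b u \<in> ?T"
      using False u str_val_less by (auto simp: strings_def)
    ultimately show ?thesis
      by simp
  qed (simp add: extensions_in_empty[OF u])
  then have "mu b w k I \<le> (\<Sum>u\<in>strings b m. if str_val b u \<in> ?T then ?c else 0)"
    unfolding mu_eq_sum_prefixes[OF assms] by (rule sum_mono)
  also have "\<dots> = (\<Sum>j<b ^ m. if j \<in> ?T then ?c else 0)"
    by (rule sum_strings_str_val)
  also have "\<dots> = of_nat (card ?T) * ?c"
    by (simp add: sum.inter_filter[symmetric] Int_def)
  finally show ?thesis .
qed

lemma mu_ge_card_inside_cells:
  assumes "m < k"
  shows "of_nat (card {j\<in>{..<b ^ m}. grid_cell (b ^ m) j \<subseteq> I}) * ennreal (real b ^ length w / real b ^ m)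
    \<le> mu b w k I"
proof -
  let ?G = "{j\<in>{..<b ^ m}. grid_cell (b ^ m) j \<subseteq> I}"
  let ?c = "ennreal (real b ^ length w / real b ^ m)"
  have "(if str_val b u \<in> ?G then ?c else 0) \<le> str_weight u * infsum str_weight (extensions_in k I u)"
    if u: "u \<in> strings b m" for u
  proof (cases "str_val b u \<in> ?G")
    case True
    have "occ w u < k"
      using occ_le_length[OF pattern_nonempty, of u] u assms by (simp add: strings_def)
    moreover have "extensions_in k I u = extensions u k"
      using True u by (intro extensions_in_eq_extensions) auto
    ultimately have "str_weight u * infsum str_weight (extensions_in k I u) =
        ennreal (1 / real b ^ m) * ennreal (real b ^ length w)"
      using infsum_extensions str_weight_strings[OF u] by simp
    also have "\<dots> = ?c"
      using base_pos by (simp add: ennreal_mult[symmetric])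
    finally have "str_weight u * infsum str_weight (extensions_in k I u) = ?c" .
    then show ?thesis
      using True by simp
  qed auto
  then have "(\<Sum>u\<in>strings b m. if str_val b u \<in> ?G then ?c else 0) \<le> mu b w k I"
    unfolding mu_eq_sum_prefixes[OF assms] by (rule sum_mono)
  moreover have "(\<Sum>u\<in>strings b m. if str_val b u \<in> ?G then ?c else 0) =
      (\<Sum>j<b ^ m. if j \<in> ?G then ?c else 0)"
    by (rule sum_strings_str_val)
  moreover have "\<dots> = of_nat (card ?G) * ?c"
    by (simp add: sum.inter_filter[symmetric] Int_def)
  ultimately show ?thesis
    by simp
qed

lemma mu_bounds:
  fixes I :: "real set"
  assumes "is_interval I" "I \<noteq> {}" "I \<subseteq> {0..<1}" "m < k"
  defines "L \<equiv> real b ^ length w * (Sup I - Inf I)" and "e \<equiv> 2 * real b ^ length w / real b ^ m"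
  shows "ennreal (L - e) \<le> mu b w k I" "mu b w k I \<le> ennreal (L + e)"
proof -
  have "bdd_below I" "bdd_above I"
    using assms(3) by (auto intro!: bdd_belowI[of _ 0] bdd_aboveI[of _ 1])
  have bounds: "0 \<le> Inf I" "Inf I \<le> Sup I" "Sup I \<le> 1" "I \<subseteq> {Inf I..Sup I}"
  proof -
    show "0 \<le> Inf I" "Sup I \<le> 1"
      using assms(2,3) by (auto intro!: cInf_greatest cSup_least)
    show "Inf I \<le> Sup I"
      using assms(2) \<open>bdd_below I\<close> \<open>bdd_above I\<close> by (intro cInf_le_cSup)
    show "I \<subseteq> {Inf I..Sup I}"
      using \<open>bdd_below I\<close> \<open>bdd_above I\<close> by (auto intro: cInf_lower cSup_upper)
  qed
  define q where "q = real b ^ length w / real b ^ m"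
  have "q \<ge> 0"
    using base_pos by (simp add: q_def)
  have "b ^ m > 0"
    using base_ge_2 by simp
  have L_pm_e: "L - e = (real (b ^ m) * (Sup I - Inf I) - 2) * q" "L + e = (real (b ^ m) * (Sup I - Inf I) + 2) * q"
    using base_pos by (simp_all add: L_def e_def q_def field_simps)
  have "ennreal (L - e) \<le> ennreal (real (card {j\<in>{..<b ^ m}. grid_cell (b ^ m) j \<subseteq> I}) * q)"
    unfolding L_pm_e using \<open>q \<ge> 0\<close> \<open>b ^ m > 0\<close> bounds
    by (intro ennreal_leI mult_right_mono card_grid_cells_inside_ge)
      (auto intro: is_interval_between_Inf_Sup[OF assms(1,2) \<open>bdd_below I\<close> \<open>bdd_above I\<close>])
  also have "\<dots> \<le> mu b w k I"
    using mu_ge_card_inside_cells[OF assms(4), of I] \<open>q \<ge> 0\<close>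
    unfolding q_def[symmetric] by (simp add: ennreal_mult ennreal_of_nat_eq_real_of_nat)
  finally show "ennreal (L - e) \<le> mu b w k I" .
  have "mu b w k I \<le> ennreal (real (card {j\<in>{..<b ^ m}. grid_cell (b ^ m) j \<inter> I \<noteq> {}}) * q)"
    using mu_le_card_meeting_cells[OF assms(4), of I] \<open>q \<ge> 0\<close>
    unfolding q_def[symmetric] by (simp add: ennreal_mult ennreal_of_nat_eq_real_of_nat)
  also have "\<dots> \<le> ennreal (L + e)"
    unfolding L_pm_e using \<open>q \<ge> 0\<close> \<open>b ^ m > 0\<close> bounds
    by (intro ennreal_leI mult_right_mono card_grid_cells_meeting_le) auto
  finally show "mu b w k I \<le> ennreal (L + e)" .
qed

end

theorem theorem2:
  fixes b p :: nat and w :: "nat list" and I :: "real set"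
  assumes "b \<ge> 2" and "p \<ge> 1" and "length w = p" and "is_string b w"
    and "is_interval I" and "I \<noteq> {}" and "I \<subseteq> {0..<1}"
  shows "(\<lambda>k. mu b w k I) \<longlonglongrightarrow> ennreal (real b ^ p * (Sup I - Inf I))"
proof -
  interpret digit_pattern b w
    using assms(1-4) by unfold_locales (auto simp: is_string_iff)
  define L where "L = real b ^ p * (Sup I - Inf I)"
  define e where "e m = 2 * real b ^ p / real b ^ m" for m
  have "e \<longlonglongrightarrow> 0"
    unfolding e_def using base_ge_2 by (intro LIMSEQ_divide_realpow_zero) simp
  then have "(\<lambda>m. L - e m) \<longlonglongrightarrow> L - 0" "(\<lambda>m. L + e m) \<longlonglongrightarrow> L + 0"
    by (rule tendsto_diff[OF tendsto_const], rule tendsto_add[OF tendsto_const])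
  then have lim_lower: "(\<lambda>m. ennreal (L - e m)) \<longlonglongrightarrow> ennreal L"
    and lim_upper: "(\<lambda>m. ennreal (L + e m)) \<longlonglongrightarrow> ennreal L"
    using tendsto_ennrealI by force+
  have "ennreal (L - e m) \<le> mu b w (Suc m) I" "mu b w (Suc m) I \<le> ennreal (L + e m)" for m
    using mu_bounds[OF assms(5-7), of m "Suc m"] assms(3) by (simp_all add: L_def e_def)
  then have "(\<lambda>m. mu b w (Suc m) I) \<longlonglongrightarrow> ennreal L"
    by (intro tendsto_sandwich[OF always_eventually always_eventually lim_lower lim_upper]) auto
  then show ?thesis
    unfolding L_def by (rule LIMSEQ_imp_Suc)
qed

end
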